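(* Let $\alpha\in(0,1)$ be irrational. Then: (a) For all $1\le t<q_n$ we have $s_{nt}=s_{n(q_n-t)}$, $h_{nt}=h_{n(q_n-t)}$ and $\xi_{nt}=-\xi_{n(q_n-t)}$. (b) If $n$ is sufficiently large, then $s_{nt}>s_{n0}$ for all $1\le t<q_n$.
   Context: $\alpha=[0;a_1,a_2,\ldots]$, with $q_0=0$, $q_1=1$, $q_{n+1}=a_nq_n+q_{n-1}$ and $p_0=1$, $p_1=0$, $p_{n+1}=a_np_n+p_{n-1}$. $\Lambda_n=q_n\alpha-p_n$. For $t\in\{0,\ldots,q_n-1\}$ define: - $\xi_{nt}=\{tq_{n-1}/q_n\}-\frac12$; - $s_{nt}=2\sin\big(\pi[t/q_n-|\Lambda_n|\xi_{nt}]\big)$; - $h_{nt}=\cot(\pi t/q_n)\sin(\pi|\Lambda_n|\xi_{nt})$. *)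

theory Defs
  imports Complex_Main
begin

text \<open>Continued fraction expansion alpha = [0; a_1, a_2, ...] of alpha in (0,1) via the Gauss map:
  cf_x alpha 0 = alpha, cf_x alpha (k+1) = frac (1 / cf_x alpha k), and a_n = floor (1 / cf_x alpha (n-1)).\<close>

fun cf_x :: "real \<Rightarrow> nat \<Rightarrow> real" where
  "cf_x \<alpha> 0 = \<alpha>"
| "cf_x \<alpha> (Suc k) = frac (1 / cf_x \<alpha> k)"

definition cf_a :: "real \<Rightarrow> nat \<Rightarrow> nat" where
  "cf_a \<alpha> n = nat \<lfloor>1 / cf_x \<alpha> (n - 1)\<rfloor>"

fun cf_q :: "real \<Rightarrow> nat \<Rightarrow> nat" where
  "cf_q \<alpha> 0 = 0"
| "cf_q \<alpha> (Suc 0) = 1"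
| "cf_q \<alpha> (Suc (Suc n)) = cf_a \<alpha> (Suc n) * cf_q \<alpha> (Suc n) + cf_q \<alpha> n"

fun cf_p :: "real \<Rightarrow> nat \<Rightarrow> nat" where
  "cf_p \<alpha> 0 = 1"
| "cf_p \<alpha> (Suc 0) = 0"
| "cf_p \<alpha> (Suc (Suc n)) = cf_a \<alpha> (Suc n) * cf_p \<alpha> (Suc n) + cf_p \<alpha> n"

definition Lam :: "real \<Rightarrow> nat \<Rightarrow> real" where
  "Lam \<alpha> n = real (cf_q \<alpha> n) * \<alpha> - real (cf_p \<alpha> n)"

definition xi :: "real \<Rightarrow> nat \<Rightarrow> nat \<Rightarrow> real" where
  "xi \<alpha> n t = frac (real t * real (cf_q \<alpha> (n - 1)) / real (cf_q \<alpha> n)) - 1/2"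

definition s_fun :: "real \<Rightarrow> nat \<Rightarrow> nat \<Rightarrow> real" where
  "s_fun \<alpha> n t = 2 * sin (pi * (real t / real (cf_q \<alpha> n) - \<bar>Lam \<alpha> n\<bar> * xi \<alpha> n t))"

definition h_fun :: "real \<Rightarrow> nat \<Rightarrow> nat \<Rightarrow> real" where
  "h_fun \<alpha> n t = cot (pi * real t / real (cf_q \<alpha> n)) * sin (pi * \<bar>Lam \<alpha> n\<bar> * xi \<alpha> n t)"

end

theory Submission
  imports Defs
begin

text \<open>Since q_n and q_(n-1) are coprime, t q_(n-1) / q_n is not an integer for 0 < t < q_n, so
  replacing t by q_n - t turns its fractional part f into 1 - f. This flips the sign of xi and
  reflects the arguments of both sine and cotangent about pi/2.
  For (b), with x_k the iterates of the Gauss map, |Lambda_n| = x_0 ... x_(n-1), which yields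
  q_(n+1) |Lambda_n| + q_n |Lambda_(n+1)| = 1 and hence |Lambda_n| < 1/q_n. As |xi| <= 1/2, the
  argument of s_nt divided by pi then lies strictly between |Lambda_n|/2 and 1 - |Lambda_n|/2,
  while for t = 0 it equals |Lambda_n|/2. So (b) holds for every n.\<close>

lemma frac_complement_coprime:
  fixes q r t :: nat
  assumes "coprime q r" "0 < t" "t < q"
  shows "frac (real (q - t) * real r / real q) = 1 - frac (real t * real r / real q)"
proof -
  define y where "y = real t * real r / real q"
  have "y \<notin> \<int>"
  proof
    assume "y \<in> \<int>"
    then obtain k where "y = of_int k" by (auto elim: Ints_cases)
    then have "real (t * r) = of_int k * real q" using assms by (simp add: y_def field_simps)
    then have "int (t * r) = k * int q" by (metis of_int_eq_iff of_int_mult of_int_of_nat_eq)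
    then have "q dvd t * r" by (metis dvd_triv_right of_nat_dvd_iff)
    then have "q dvd t" using assms(1) by (metis coprime_dvd_mult_left_iff)
    then show False using assms by (auto dest: dvd_imp_le)
  qed
  have "real (q - t) * real r / real q = real r + - y"
    using assms by (simp add: y_def of_nat_diff field_simps)
  then have "frac (real (q - t) * real r / real q) = frac (- y)"
    using frac_add_int_left[OF Ints_of_nat[of r], of "- y"] by simp
  with \<open>y \<notin> \<int>\<close> show ?thesis by (simp add: y_def frac_neg)
qed

lemma sin_pi_less_sin_pi:
  assumes "0 \<le> c" "c < x" "x < 1 - c"
  shows "sin (pi * c) < sin (pi * x)"
proof -
  have mono: "sin (pi * c) < sin (pi * y)" if "c < y" "y \<le> 1/2" for y
  proof (rule sin_monotone_2pi)
    show "- (pi / 2) \<le> pi * c" using mult_nonneg_nonneg[OF pi_ge_zero assms(1)] pi_gt_zero by linarith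
    show "pi * c < pi * y" using that(1) by simp
    show "pi * y \<le> pi / 2" using mult_left_mono[OF that(2), of pi] by simp
  qed
  show ?thesis
  proof (cases "x \<le> 1/2")
    case False
    have "sin (pi * c) < sin (pi * (1 - x))" using False assms by (intro mono) auto
    also have "pi * (1 - x) = pi - pi * x" by (simp add: algebra_simps)
    finally show ?thesis by simp
  qed (use assms mono in auto)
qed

lemma Lam_Suc_Suc: "Lam \<alpha> (Suc (Suc n)) = real (cf_a \<alpha> (Suc n)) * Lam \<alpha> (Suc n) + Lam \<alpha> n"
  by (simp add: Lam_def algebra_simps)

lemma coprime_cf_q_Suc: "coprime (cf_q \<alpha> (Suc n)) (cf_q \<alpha> n)"
  by (induction n) (simp_all add: coprime_iff_gcd_eq_1 gcd_add_mult gcd.commute)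

lemma xi_bounds: "- 1/2 \<le> xi \<alpha> n t" "xi \<alpha> n t < 1/2"
  using frac_ge_0[of "real t * real (cf_q \<alpha> (n - 1)) / real (cf_q \<alpha> n)"]
    frac_lt_1[of "real t * real (cf_q \<alpha> (n - 1)) / real (cf_q \<alpha> n)"]
  unfolding xi_def by linarith+

lemma xi_complement:
  assumes "1 \<le> t" "t < cf_q \<alpha> n"
  shows "xi \<alpha> n (cf_q \<alpha> n - t) = - xi \<alpha> n t"
proof -
  obtain m where "n = Suc m" using assms by (cases n) auto
  then show ?thesis
    using frac_complement_coprime[OF coprime_cf_q_Suc[of \<alpha> m], of t] assms by (simp add: xi_def)
qed

lemma s_fun_complement:
  assumes "1 \<le> t" "t < cf_q \<alpha> n"
  shows "s_fun \<alpha> n (cf_q \<alpha> n - t) = s_fun \<alpha> n t"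
proof -
  let ?z = "real t / real (cf_q \<alpha> n) - \<bar>Lam \<alpha> n\<bar> * xi \<alpha> n t"
  have "real (cf_q \<alpha> n - t) / real (cf_q \<alpha> n) - \<bar>Lam \<alpha> n\<bar> * xi \<alpha> n (cf_q \<alpha> n - t) = 1 - ?z"
    using assms by (simp add: xi_complement of_nat_diff diff_divide_distrib)
  then have "s_fun \<alpha> n (cf_q \<alpha> n - t) = 2 * sin (pi - pi * ?z)"
    by (simp add: s_fun_def right_diff_distrib)
  then show ?thesis by (simp add: s_fun_def)
qed

lemma h_fun_complement:
  assumes "1 \<le> t" "t < cf_q \<alpha> n"
  shows "h_fun \<alpha> n (cf_q \<alpha> n - t) = h_fun \<alpha> n t"
proof -
  have "pi * real (cf_q \<alpha> n - t) / real (cf_q \<alpha> n) = pi - pi * real t / real (cf_q \<alpha> n)"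
    using assms by (simp add: of_nat_diff field_simps)
  then show ?thesis using assms by (simp add: h_fun_def xi_complement cot_def)
qed

lemma cf_x_notin_Rats: "\<alpha> \<notin> \<rat> \<Longrightarrow> cf_x \<alpha> k \<notin> \<rat>"
proof (induction k)
  case (Suc k)
  show ?case
  proof
    assume "cf_x \<alpha> (Suc k) \<in> \<rat>"
    then have "cf_x \<alpha> (Suc k) + of_int \<lfloor>1 / cf_x \<alpha> k\<rfloor> \<in> \<rat>" by simp
    then have "inverse (1 / cf_x \<alpha> k) \<in> \<rat>" by (simp add: frac_def Rats_inverse del: inverse_divide)
    with Suc show False by simp
  qed
qed simp

locale irrational_unit_interval =
  fixes \<alpha> :: real
  assumes pos: "0 < \<alpha>" and less_1: "\<alpha> < 1" and irrational: "\<alpha> \<notin> \<rat>"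
begin

lemma cf_x_bounds: "0 < cf_x \<alpha> k" "cf_x \<alpha> k < 1"
proof -
  have "cf_x \<alpha> k \<noteq> 0" using cf_x_notin_Rats[OF irrational] by (metis Rats_0)
  moreover have "0 \<le> cf_x \<alpha> k \<and> cf_x \<alpha> k < 1"
    using pos less_1 by (cases k) (auto simp: frac_lt_1)
  ultimately show "0 < cf_x \<alpha> k" "cf_x \<alpha> k < 1" by auto
qed

lemma cf_a_ge_1: "1 \<le> cf_a \<alpha> (Suc k)"
proof -
  have "1 < 1 / cf_x \<alpha> k" using cf_x_bounds[of k] by simp
  then have "1 \<le> \<lfloor>1 / cf_x \<alpha> k\<rfloor>" by simp
  then show ?thesis using nat_mono by (fastforce simp: cf_a_def)
qed

lemma inverse_cf_x: "1 / cf_x \<alpha> k = real (cf_a \<alpha> (Suc k)) + cf_x \<alpha> (Suc k)"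
proof -
  have "\<lfloor>1 / cf_x \<alpha> k\<rfloor> \<ge> 0" using cf_x_bounds[of k] by simp
  then have "real (cf_a \<alpha> (Suc k)) = of_int \<lfloor>1 / cf_x \<alpha> k\<rfloor>" by (simp add: cf_a_def)
  then show ?thesis by (simp add: frac_def)
qed

lemma prod_cf_x_rec:
  "(\<Prod>k<n. cf_x \<alpha> k) = real (cf_a \<alpha> (Suc n)) * (\<Prod>k<Suc n. cf_x \<alpha> k) + (\<Prod>k<Suc (Suc n). cf_x \<alpha> k)"
proof -
  have "cf_x \<alpha> n * (real (cf_a \<alpha> (Suc n)) + cf_x \<alpha> (Suc n)) = 1"
    using inverse_cf_x[of n] cf_x_bounds[of n] by (simp add: field_simps del: cf_x.simps)
  then have "(\<Prod>k<n. cf_x \<alpha> k) * (cf_x \<alpha> n * (real (cf_a \<alpha> (Suc n)) + cf_x \<alpha> (Suc n)))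
      = (\<Prod>k<n. cf_x \<alpha> k)" by simp
  then show ?thesis by (simp add: algebra_simps del: cf_x.simps)
qed

lemma Lam_eq_prod: "Lam \<alpha> n = (-1) ^ Suc n * (\<Prod>k<n. cf_x \<alpha> k)"
proof (induction n rule: induct_nat_012)
  case (ge2 n)
  let ?P = "\<lambda>m. \<Prod>k<m. cf_x \<alpha> k"
  have "Lam \<alpha> (Suc (Suc n)) = real (cf_a \<alpha> (Suc n)) * ((-1) ^ Suc (Suc n) * ?P (Suc n)) + (-1) ^ Suc n * ?P n"
    by (simp only: Lam_Suc_Suc ge2)
  also have "\<dots> = (-1) ^ Suc n * (?P n - real (cf_a \<alpha> (Suc n)) * ?P (Suc n))"
    by (simp only: power_Suc) (simp only: algebra_simps)
  also have "\<dots> = (-1) ^ Suc (Suc (Suc n)) * ?P (Suc (Suc n))"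
    using prod_cf_x_rec[of n] by (simp only: power_Suc) simp
  finally show ?case .
qed (simp_all add: Lam_def)

lemma abs_Lam_eq_prod: "\<bar>Lam \<alpha> n\<bar> = (\<Prod>k<n. cf_x \<alpha> k)"
  using cf_x_bounds by (simp add: Lam_eq_prod abs_mult prod_nonneg less_imp_le)

lemma abs_Lam_rec: "\<bar>Lam \<alpha> n\<bar> = real (cf_a \<alpha> (Suc n)) * \<bar>Lam \<alpha> (Suc n)\<bar> + \<bar>Lam \<alpha> (Suc (Suc n))\<bar>"
  unfolding abs_Lam_eq_prod by (rule prod_cf_x_rec)

lemma abs_Lam_pos: "0 < \<bar>Lam \<alpha> n\<bar>"
  using cf_x_bounds by (simp add: abs_Lam_eq_prod prod_pos)

lemma cf_q_Suc_abs_Lam_add: "real (cf_q \<alpha> (Suc n)) * \<bar>Lam \<alpha> n\<bar> + real (cf_q \<alpha> n) * \<bar>Lam \<alpha> (Suc n)\<bar> = 1"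
proof (induction n)
  case (Suc n)
  then show ?case using abs_Lam_rec[of n] by (simp add: algebra_simps)
qed (simp add: Lam_def)

lemma cf_q_le_Suc: "cf_q \<alpha> n \<le> cf_q \<alpha> (Suc n)"
proof (cases n)
  case (Suc m)
  have "cf_q \<alpha> (Suc m) \<le> cf_a \<alpha> (Suc m) * cf_q \<alpha> (Suc m)" using cf_a_ge_1[of m] by simp
  then show ?thesis using Suc by (simp add: trans_le_add1)
qed simp

lemma cf_q_abs_Lam_less_1: "real (cf_q \<alpha> n) * \<bar>Lam \<alpha> n\<bar> < 1"
proof (cases "cf_q \<alpha> n = 0")
  case False
  have "real (cf_q \<alpha> n) * \<bar>Lam \<alpha> n\<bar> \<le> real (cf_q \<alpha> (Suc n)) * \<bar>Lam \<alpha> n\<bar>"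
    using cf_q_le_Suc by (simp add: mult_right_mono)
  moreover have "0 < real (cf_q \<alpha> n) * \<bar>Lam \<alpha> (Suc n)\<bar>" using False abs_Lam_pos by simp
  ultimately show ?thesis using cf_q_Suc_abs_Lam_add[of n] by linarith
qed simp

lemma s_fun_0_less:
  assumes "1 \<le> t" "t < cf_q \<alpha> n"
  shows "s_fun \<alpha> n 0 < s_fun \<alpha> n t"
proof -
  define q where "q = real (cf_q \<alpha> n)"
  define L where "L = \<bar>Lam \<alpha> n\<bar>"
  have "0 < L" "L < 1 / q" using abs_Lam_pos cf_q_abs_Lam_less_1[of n] assms
    by (auto simp: L_def q_def field_simps)
  moreover have "1 / q \<le> real t / q" "real t / q \<le> 1 - 1 / q"
    using assms by (auto simp: q_def field_simps)
  moreover have "- (L / 2) \<le> L * xi \<alpha> n t" "L * xi \<alpha> n t \<le> L / 2"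
    using xi_bounds[of \<alpha> n t] mult_left_mono[of "xi \<alpha> n t" "1/2" L] mult_left_mono[of "- 1/2" "xi \<alpha> n t" L] \<open>0 < L\<close>
    by simp_all
  ultimately have "L / 2 < real t / q - L * xi \<alpha> n t" "real t / q - L * xi \<alpha> n t < 1 - L / 2"
    by linarith+
  then have "sin (pi * (L / 2)) < sin (pi * (real t / q - L * xi \<alpha> n t))"
    using \<open>0 < L\<close> by (intro sin_pi_less_sin_pi) auto
  then show ?thesis by (simp add: s_fun_def xi_def L_def q_def)
qed

end

theorem lemma4p2:
  fixes \<alpha> :: real
  assumes "0 < \<alpha>" "\<alpha> < 1" "\<alpha> \<notin> \<rat>"
  shows "(\<forall>n t. 1 \<le> t \<and> t < cf_q \<alpha> n \<longrightarrow>
            s_fun \<alpha> n t = s_fun \<alpha> n (cf_q \<alpha> n - t) \<and>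
            h_fun \<alpha> n t = h_fun \<alpha> n (cf_q \<alpha> n - t) \<and>
            xi \<alpha> n t = - xi \<alpha> n (cf_q \<alpha> n - t))
       \<and> (\<exists>N. \<forall>n\<ge>N. \<forall>t. 1 \<le> t \<and> t < cf_q \<alpha> n \<longrightarrow> s_fun \<alpha> n t > s_fun \<alpha> n 0)"
proof -
  interpret irrational_unit_interval \<alpha> using assms by unfold_locales
  show ?thesis
    by (auto simp: s_fun_complement h_fun_complement xi_complement s_fun_0_less)
qed

end
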